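(* Let $\mathbf{X}$ and $\mathbf{Y}$ be Euclidean spaces, let $M\subset\mathbf{Y}$ and $\bar y\in M$, and let $F\colon\mathbf{X}\to\mathbf{Y}$ be a local coordinate system for $M$ around $\bar y$: $F$ is continuously differentiable and its restriction to an open set $U\subset\mathbf{X}$ is a diffeomorphism onto an open neighborhood $V$ of $\bar y$ in $M$. Define $\Phi\colon V\times\mathbf{Y}\to\mathbf{Y}$ by \[ \Phi\big(F(x),y\big) = F(x+s)\quad\text{where } s\in\mathbf{X} \text{ minimizes } |F(x)+\nabla F(x)s-y|, \] for $x\in U$ and $y\in\mathbf{Y}$ (the minimizer $s$ being unique since $\nabla F(x)$ is one-to-one). Then $\Phi$ is a faithful approximation of the projection for the manifold $M$ around $\bar y$.
   Context: $P_M(y)$ denotes the set of nearest points of $M$ to $y$. A faithful approximation of the projection onto $M$ around $\bar y$ is a map $\Phi\colon V\times\mathbf{Y}\to M$, where $V$ is a neighborhood of $\bar y$ in $M$, such that: given any constant $\epsilon>0$ and angle $\alpha>0$, if points $z\in M$ and $y\notin M$ are sufficiently close to $\bar y$, then any point $\hat z\in P_M(y)$ such that the angle between the vectors $z-y$ and $\hat z-y$ is at least $\alpha$ satisfies $|\hat z-\Phi(z,y)|\le\epsilon|y-z|$. *)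

theory Defs
  imports "HOL-Analysis.Analysis"
begin

definition nearest_points :: "'b::euclidean_space set \<Rightarrow> 'b \<Rightarrow> 'b set" where
  "nearest_points M y = {z \<in> M. \<forall>w\<in>M. dist y z \<le> dist y w}"

text \<open>Angle between two vectors (used only for nonzero vectors).\<close>
definition vec_angle :: "'b::euclidean_space \<Rightarrow> 'b \<Rightarrow> real" where
  "vec_angle u v = arccos (inner u v / (norm u * norm v))"

definition faithful_approx ::
  "'b::euclidean_space set \<Rightarrow> 'b \<Rightarrow> 'b set \<Rightarrow> ('b \<Rightarrow> 'b \<Rightarrow> 'b) \<Rightarrow> bool" where
  "faithful_approx M ybar V Phi \<longleftrightarrow>
     V \<subseteq> M \<and> ybar \<in> V \<and> (\<exists>W. openin (top_of_set M) W \<and> ybar \<in> W \<and> W \<subseteq> V) \<and>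
     (\<forall>\<epsilon>>0. \<forall>\<alpha>>0. \<exists>\<delta>>0. \<forall>z y zh.
        z \<in> M \<and> y \<notin> M \<and> dist z ybar < \<delta> \<and> dist y ybar < \<delta> \<and>
        zh \<in> nearest_points M y \<and> vec_angle (z - y) (zh - y) \<ge> \<alpha>
        \<longrightarrow> norm (zh - Phi z y) \<le> \<epsilon> * norm (y - z))"

end

theory Submission
  imports Defs
begin

(* Write z = F x, zh = F xh for a nearest point zh of M to y, and A = F' x, B = F' xh. The
   least-squares step s makes e = y - z - A s orthogonal to the range of A, and first-order
   optimality of xh makes r = y - zh orthogonal to the range of B. Hence the gap
   d = zh - z - A s = e - r = A (xh - x - s) + (linearization error) satisfies
   |d|^2 = <d, e> - <d, r>, in which A (xh - x - s) only contributes through A - B. All terms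
   are then O(eta) |y - z|^2, where eta bounds the oscillation of F' near the base point, and
   F (x + s) differs from z + A s by O(eta) |y - z|; so |zh - Phi z y| = O(sqrt eta) |y - z|. *)

lemma nearest_point_orthogonal_derivative:
  fixes F :: "'a::real_normed_vector \<Rightarrow> 'b::real_inner"
  assumes deriv: "(F has_derivative F') (at x)" and "open U" "x \<in> U"
    and nearest: "\<And>\<xi>. \<xi> \<in> U \<Longrightarrow> dist y (F x) \<le> dist y (F \<xi>)"
  shows "inner (y - F x) (F' v) = 0"
proof -
  define f where "f \<xi> = inner (y - F \<xi>) (y - F \<xi>)" for \<xi>
  have "(f has_derivative (\<lambda>h. inner (y - F x) (- F' h) + inner (- F' h) (y - F x))) (at x)"
    unfolding f_def
    by (intro has_derivative_inner has_derivative_diff[where f'="\<lambda>_. 0", simplified]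
        has_derivative_const deriv)
  moreover have "\<forall>\<xi>\<in>U. f x \<le> f \<xi>"
  proof
    fix \<xi> assume "\<xi> \<in> U"
    then have "(dist y (F x))\<^sup>2 \<le> (dist y (F \<xi>))\<^sup>2"
      using nearest by (simp add: power_mono)
    then show "f x \<le> f \<xi>" by (simp add: f_def dist_norm power2_norm_eq_inner)
  qed
  ultimately have "(\<lambda>h. inner (y - F x) (- F' h) + inner (- F' h) (y - F x)) = (\<lambda>v. 0)"
    using differential_zero_maxmin[OF \<open>x \<in> U\<close> \<open>open U\<close>] by blast
  then have "inner (y - F x) (- F' v) + inner (- F' v) (y - F x) = 0" by meson
  then show ?thesis by (simp add: inner_commute)
qed

lemma least_squares_exists:
  fixes A :: "'a::euclidean_space \<Rightarrow>\<^sub>L 'b::euclidean_space"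
  obtains s where "\<And>t. norm (A s - w) \<le> norm (A t - w)"
proof -
  define S where "S = range (blinfun_apply A)"
  have "closed S" unfolding S_def
    by (intro closed_subspace linear_subspace_image subspace_UNIV)
      (simp add: blinfun.bounded_linear_right bounded_linear.linear)
  then obtain s where s: "A s = closest_point S w"
    using closest_point_in_set[of S w] unfolding S_def by auto
  have "dist w (A s) \<le> dist w (A t)" for t
    unfolding s using \<open>closed S\<close> by (rule closest_point_le) (simp add: S_def)
  then show ?thesis
    by (intro that) (simp add: dist_norm norm_minus_commute)
qed

lemma least_squares_residual_orthogonal:
  fixes A :: "'a::real_normed_vector \<Rightarrow>\<^sub>L 'b::real_inner"
  assumes "\<And>t. norm (A s - w) \<le> norm (A t - w)"
  shows "inner (w - A s) (A v) = 0"
proof (rule nearest_point_orthogonal_derivative[where F = "blinfun_apply A" and U = UNIV])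
  show "(blinfun_apply A has_derivative blinfun_apply A) (at s)"
    by (simp add: blinfun.bounded_linear_right bounded_linear_imp_has_derivative)
  show "dist w (A s) \<le> dist w (A t)" if "t \<in> UNIV" for t
    using assms[of t] by (simp add: dist_norm norm_minus_commute)
qed simp_all

lemma least_squares_norm_le:
  fixes A :: "'a::real_normed_vector \<Rightarrow>\<^sub>L 'b::real_normed_vector"
  assumes min: "\<And>t. norm (A s - w) \<le> norm (A t - w)"
    and below: "\<And>v. c * norm v \<le> norm (A v)" and "c > 0"
  shows "norm (w - A s) \<le> norm w" and "norm s \<le> 2 * norm w / c"
proof -
  show res: "norm (w - A s) \<le> norm w"
    using min[of 0] by (simp add: norm_minus_commute)
  have "norm (A s) \<le> norm w + norm (w - A s)"
    using norm_triangle_ineq4[of w "w - A s"] by simp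
  with res have "c * norm s \<le> 2 * norm w"
    using below[of s] by linarith
  then show "norm s \<le> 2 * norm w / c"
    using \<open>c > 0\<close> by (simp add: pos_le_divide_eq mult.commute)
qed

lemma blinfun_bounded_below_perturb:
  fixes A L :: "'a::real_normed_vector \<Rightarrow>\<^sub>L 'b::real_normed_vector"
  assumes "\<And>v. m * norm v \<le> norm (L v)" and "norm (A - L) \<le> \<eta>"
  shows "(m - \<eta>) * norm v \<le> norm (A v)"
proof -
  have "norm (L v - A v) = norm ((A - L) v)"
    by (simp add: blinfun.diff_left norm_minus_commute)
  also have "\<dots> \<le> \<eta> * norm v"
    using norm_blinfun[of "A - L" v] assms(2) by (meson mult_right_mono norm_ge_zero order_trans)
  finally show ?thesis
    using assms(1)[of v] norm_triangle_ineq2[of "L v" "A v"] by (simp add: left_diff_distrib)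
qed

lemma linearization_error_le:
  fixes F :: "'a::real_normed_vector \<Rightarrow> 'b::real_normed_vector" and F' :: "'a \<Rightarrow> 'a \<Rightarrow>\<^sub>L 'b"
  assumes "convex S" and deriv: "\<And>x. x \<in> S \<Longrightarrow> (F has_derivative F' x) (at x within S)"
    and near: "\<And>x. x \<in> S \<Longrightarrow> norm (F' x - L) \<le> \<eta>" and "a \<in> S" "b \<in> S"
  shows "norm (F b - F a - L (b - a)) \<le> \<eta> * norm (b - a)"
proof -
  have "norm ((F b - L b) - (F a - L a)) \<le> \<eta> * norm (b - a)"
  proof (rule differentiable_bound[OF \<open>convex S\<close>])
    show "((\<lambda>x. F x - L x) has_derivative blinfun_apply (F' x - L)) (at x within S)"
      if "x \<in> S" for x
      using has_derivative_diff[OF deriv[OF that] bounded_linear_imp_has_derivative[OF blinfun.bounded_linear_right, of L]]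
      by (simp add: minus_blinfun.rep_eq fun_diff_def)
    show "onorm (blinfun_apply (F' x - L)) \<le> \<eta>" if "x \<in> S" for x
      using near[OF that] by (simp add: norm_blinfun.rep_eq)
  qed fact+
  then show ?thesis by (simp add: blinfun.diff_right algebra_simps)
qed

lemma linearization_error_at_le:
  fixes F :: "'a::real_normed_vector \<Rightarrow> 'b::real_normed_vector" and F' :: "'a \<Rightarrow> 'a \<Rightarrow>\<^sub>L 'b"
  assumes "convex S" and "\<And>x. x \<in> S \<Longrightarrow> (F has_derivative F' x) (at x within S)"
    and near: "\<And>x. x \<in> S \<Longrightarrow> norm (F' x - L) \<le> \<eta>" and "a \<in> S" "b \<in> S" "x0 \<in> S"
  shows "norm (F b - F a - F' x0 (b - a)) \<le> 2 * \<eta> * norm (b - a)"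
proof -
  have "F b - F a - F' x0 (b - a) = (F b - F a - L (b - a)) - (F' x0 - L) (b - a)"
    by (simp add: blinfun.diff_left)
  also have "norm \<dots> \<le> \<eta> * norm (b - a) + \<eta> * norm (b - a)"
  proof (rule norm_triangle_ineq4[THEN order_trans], rule add_mono)
    show "norm (F b - F a - L (b - a)) \<le> \<eta> * norm (b - a)"
      by (rule linearization_error_le) (use assms in auto)
    show "norm ((F' x0 - L) (b - a)) \<le> \<eta> * norm (b - a)"
      using norm_blinfun[of "F' x0 - L" "b - a"] near[OF \<open>x0 \<in> S\<close>]
      by (meson mult_right_mono norm_ge_zero order_trans)
  qed
  finally show ?thesis by simp
qed

lemma norm_sq_le_of_orthogonal_residuals:
  fixes e r \<rho> :: "'b::real_inner" and A B :: "'a::real_normed_vector \<Rightarrow>\<^sub>L 'b"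
  assumes e: "\<And>v. inner e (A v) = 0" and r: "\<And>v. inner r (B v) = 0"
    and decomp: "e - r = A u + \<rho>"
  shows "(norm (e - r))\<^sup>2 \<le> norm \<rho> * (norm e + norm r) + norm (A - B) * norm u * norm r"
proof -
  have "inner (A u) e = 0" "inner (B u) r = 0"
    using e[of u] r[of u] by (simp_all add: inner_commute)
  moreover have "(norm (e - r))\<^sup>2 = inner (e - r) e - inner (e - r) r"
    by (simp add: power2_norm_eq_inner inner_diff_right)
  ultimately have "(norm (e - r))\<^sup>2 = inner \<rho> e - inner ((A - B) u) r - inner \<rho> r"
    unfolding decomp by (simp add: inner_add_left inner_diff_left blinfun.diff_left)
  also have "\<dots> \<le> norm \<rho> * norm e + norm ((A - B) u) * norm r + norm \<rho> * norm r"
    using Cauchy_Schwarz_ineq2[of \<rho> e] Cauchy_Schwarz_ineq2[of "(A - B) u" r]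
      Cauchy_Schwarz_ineq2[of \<rho> r] by linarith
  also have "\<dots> \<le> norm \<rho> * (norm e + norm r) + norm (A - B) * norm u * norm r"
    using norm_blinfun[of "A - B" u] by (simp add: mult_right_mono distrib_left)
  finally show ?thesis .
qed

lemma linearization_norm_diff_ge:
  fixes F :: "'a::real_normed_vector \<Rightarrow> 'b::real_normed_vector" and F' :: "'a \<Rightarrow> 'a \<Rightarrow>\<^sub>L 'b"
  assumes "convex S" and "\<And>x. x \<in> S \<Longrightarrow> (F has_derivative F' x) (at x within S)"
    and "\<And>x. x \<in> S \<Longrightarrow> norm (F' x - L) \<le> \<eta>" and L_below: "\<And>v. m * norm v \<le> norm (L v)"
    and "a \<in> S" "b \<in> S"
  shows "(m - \<eta>) * norm (b - a) \<le> norm (F b - F a)"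
proof -
  have "norm (F b - F a - L (b - a)) \<le> \<eta> * norm (b - a)"
    by (rule linearization_error_le) (use assms in auto)
  then show ?thesis
    using L_below[of "b - a"] norm_triangle_ineq2[of "L (b - a)" "F b - F a"]
    by (simp add: norm_minus_commute left_diff_distrib)
qed

lemma least_squares_gap_le:
  fixes A B :: "'a::real_normed_vector \<Rightarrow>\<^sub>L 'b::real_inner"
  assumes e_orth: "\<And>v. inner (w - A s) (A v) = 0" and r_orth: "\<And>v. inner (w - p) (B v) = 0"
    and e_le: "norm (w - A s) \<le> D" and r_le: "norm (w - p) \<le> D" and AB_le: "norm (A - B) \<le> 2 * \<eta>"
    and lin: "norm (p - A q) \<le> 2 * \<eta> * norm q"
    and q_le: "norm q \<le> 2 * D / c" and s_le: "norm s \<le> 2 * D / c" and "\<eta> \<ge> 0" "c > 0"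
  shows "norm (p - A s) \<le> 4 * sqrt (\<eta> / c) * D"
proof -
  have "D \<ge> 0" using e_le norm_ge_zero order_trans by blast
  have decomp: "(w - A s) - (w - p) = A (q - s) + (p - A q)"
    by (simp add: blinfun.diff_right)
  have "(norm (p - A s))\<^sup>2 = (norm ((w - A s) - (w - p)))\<^sup>2"
    by (simp add: algebra_simps)
  also have "\<dots> \<le> norm (p - A q) * (norm (w - A s) + norm (w - p))
      + norm (A - B) * norm (q - s) * norm (w - p)"
    by (rule norm_sq_le_of_orthogonal_residuals[OF e_orth r_orth decomp])
  also have "\<dots> \<le> (2 * \<eta> * (2 * D / c)) * (D + D) + (2 * \<eta>) * (4 * D / c) * D"
  proof (intro add_mono mult_mono)
    show "norm (q - s) \<le> 4 * D / c"
      using norm_triangle_ineq4[of q s] q_le s_le by simp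
    show "norm (p - A q) \<le> 2 * \<eta> * (2 * D / c)"
      using lin mult_left_mono[OF q_le, of "2 * \<eta>"] \<open>\<eta> \<ge> 0\<close> by simp
  qed (use e_le r_le AB_le \<open>\<eta> \<ge> 0\<close> \<open>c > 0\<close> \<open>D \<ge> 0\<close> in auto)
  also have "\<dots> = (4 * sqrt (\<eta> / c) * D)\<^sup>2"
    using \<open>\<eta> \<ge> 0\<close> \<open>c > 0\<close> by (simp add: power_mult_distrib power2_eq_square[of D])
  finally show ?thesis
    by (rule power2_le_imp_le) (use \<open>\<eta> \<ge> 0\<close> \<open>c > 0\<close> \<open>D \<ge> 0\<close> in simp)
qed

lemma least_squares_step_error:
  fixes F :: "'a::euclidean_space \<Rightarrow> 'b::euclidean_space" and F' :: "'a \<Rightarrow> 'a \<Rightarrow>\<^sub>L 'b"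
  assumes deriv: "\<And>\<xi>. \<xi> \<in> ball xb r \<Longrightarrow> (F has_derivative F' \<xi>) (at \<xi>)"
    and near_L: "\<And>\<xi>. \<xi> \<in> ball xb r \<Longrightarrow> norm (F' \<xi> - L) \<le> \<eta>"
    and L_below: "\<And>v. 2 * c * norm v \<le> norm (L v)" and "c > 0" and "\<eta> \<le> c / 2"
    and x: "dist xb x < r / 2" and xh: "dist xb xh < r / 2"
    and s_min: "\<And>t. norm (F' x s - (y - F x)) \<le> norm (F' x t - (y - F x))"
    and orth: "\<And>v. inner (y - F xh) (F' xh v) = 0"
    and closer: "norm (y - F xh) \<le> norm (y - F x)"
    and small: "norm (y - F x) < c * r / 4"
  shows "norm (F xh - F (x + s)) \<le> 4 * (sqrt (\<eta> / c) + \<eta> / c) * norm (y - F x)"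
proof -
  define D where "D = norm (y - F x)"
  have xB: "x \<in> ball xb r" and xhB: "xh \<in> ball xb r"
    using x xh by (simp_all, smt (verit) zero_le_dist)+
  have deriv_within: "(F has_derivative F' \<xi>) (at \<xi> within ball xb r)" if "\<xi> \<in> ball xb r" for \<xi>
    using deriv[OF that] by (rule has_derivative_at_withinI)
  have lin: "norm (F b - F a - F' x (b - a)) \<le> 2 * \<eta> * norm (b - a)"
    if "a \<in> ball xb r" "b \<in> ball xb r" for a b
    by (rule linearization_error_at_le[OF convex_ball deriv_within near_L that xB])
  have "\<eta> \<ge> 0" using near_L[OF xB] norm_ge_zero order_trans by blast
  then have shrink: "c * t \<le> (2 * c - \<eta>) * t" if "t \<ge> 0" for t
    using \<open>\<eta> \<le> c / 2\<close> that by (intro mult_right_mono) auto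
  have A_below: "c * norm v \<le> norm (F' x v)" for v
    using blinfun_bounded_below_perturb[OF L_below near_L[OF xB], of v] shrink[of "norm v"] by simp
  have e_le: "norm (y - F x - F' x s) \<le> D" and s_le: "norm s \<le> 2 * D / c"
    using least_squares_norm_le[OF s_min A_below \<open>c > 0\<close>] by (simp_all add: D_def)
  have "2 * D / c < r / 2"
    using small \<open>c > 0\<close> by (simp add: D_def field_simps)
  then have xsB: "x + s \<in> ball xb r"
    using x s_le dist_triangle[of xb "x + s" x] by (simp add: dist_norm)
  have xh_le: "norm (xh - x) \<le> 2 * D / c"
  proof -
    have "c * norm (xh - x) \<le> norm (F xh - F x)"
      using linearization_norm_diff_ge[OF convex_ball deriv_within near_L L_below xB xhB]
        shrink[of "norm (xh - x)"] by simp
    also have "\<dots> \<le> 2 * D"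
      using norm_triangle_ineq4[of "y - F x" "y - F xh"] closer by (simp add: D_def)
    finally show ?thesis using \<open>c > 0\<close> by (simp add: pos_le_divide_eq mult.commute)
  qed
  have "norm (F' x - F' xh) \<le> 2 * \<eta>"
    using norm_triangle_ineq4[of "F' x - L" "F' xh - L"] near_L[OF xB] near_L[OF xhB] by simp
  then have gap: "norm ((F xh - F x) - F' x s) \<le> 4 * sqrt (\<eta> / c) * D"
    using least_squares_gap_le[of "y - F x" "F' x" s "F xh - F x" "F' xh" D \<eta> "xh - x" c]
      least_squares_residual_orthogonal[OF s_min] orth e_le closer lin[OF xB xhB] xh_le s_le
      \<open>\<eta> \<ge> 0\<close> \<open>c > 0\<close> by (simp add: D_def)
  have "norm (F xh - F (x + s)) \<le> norm ((F xh - F x) - F' x s) + norm (F (x + s) - F x - F' x s)"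
    using norm_triangle_ineq4[of "(F xh - F x) - F' x s" "F (x + s) - F x - F' x s"] by simp
  also have "\<dots> \<le> 4 * sqrt (\<eta> / c) * D + 2 * \<eta> * (2 * D / c)"
    using gap lin[OF xB xsB] mult_left_mono[OF s_le, of "2 * \<eta>"] \<open>\<eta> \<ge> 0\<close> by simp
  finally show ?thesis by (simp add: D_def algebra_simps)
qed

lemma homeomorphism_inverse_near:
  assumes hom: "homeomorphism U V F G" and V: "openin (top_of_set M) V" "ybar \<in> V" and "r > 0"
  obtains \<delta> where "\<delta> > 0"
    and "\<And>z. z \<in> M \<Longrightarrow> dist z ybar < \<delta> \<Longrightarrow> z \<in> V \<and> dist (G ybar) (G z) < r"
proof -
  obtain \<delta>1 where "\<delta>1 > 0" and \<delta>1: "\<And>z. z \<in> V \<Longrightarrow> dist z ybar < \<delta>1 \<Longrightarrow> dist (G z) (G ybar) < r"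
    using hom V(2) \<open>r > 0\<close> unfolding homeomorphism_def continuous_on_iff by metis
  obtain \<delta>2 where "\<delta>2 > 0" and \<delta>2: "\<And>z. z \<in> M \<Longrightarrow> dist z ybar < \<delta>2 \<Longrightarrow> z \<in> V"
    using V unfolding openin_euclidean_subtopology_iff by blast
  show ?thesis
    by (rule that[of "min \<delta>1 \<delta>2"]) (use \<open>\<delta>1 > 0\<close> \<open>\<delta>2 > 0\<close> \<delta>1 \<delta>2 in \<open>auto simp: dist_commute\<close>)
qed

lemma nearest_points_dist_le:
  assumes "zh \<in> nearest_points M y" and "ybar \<in> M"
  shows "dist zh ybar \<le> 2 * dist y ybar"
proof -
  have "dist y zh \<le> dist y ybar"
    using assms unfolding nearest_points_def by blast
  then show ?thesis
    using dist_triangle[of zh ybar y] by (simp add: dist_commute)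
qed

lemma small_sqrt_plus_le:
  fixes \<epsilon> :: real
  assumes "\<epsilon> > 0"
  obtains \<kappa> where "\<kappa> > 0" "\<kappa> \<le> 1 / 2" "4 * (sqrt \<kappa> + \<kappa>) \<le> \<epsilon>"
proof
  define \<kappa> where "\<kappa> = min (1 / 2) (min (\<epsilon>\<^sup>2 / 64) (\<epsilon> / 8))"
  show "\<kappa> > 0" "\<kappa> \<le> 1 / 2" using assms by (simp_all add: \<kappa>_def)
  have "sqrt \<kappa> \<le> sqrt ((\<epsilon> / 8)\<^sup>2)"
    by (rule real_sqrt_le_mono) (simp add: \<kappa>_def power_divide)
  then have "sqrt \<kappa> \<le> \<epsilon> / 8" using assms by simp
  moreover have "\<kappa> \<le> \<epsilon> / 8" by (simp add: \<kappa>_def)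
  ultimately show "4 * (sqrt \<kappa> + \<kappa>) \<le> \<epsilon>" by argo
qed

lemma continuous_on_open_ball_le:
  fixes f :: "'a::metric_space \<Rightarrow> 'b::metric_space"
  assumes "continuous_on U f" "open U" "x \<in> U" "e > 0"
  obtains r where "r > 0" "ball x r \<subseteq> U" "\<And>\<xi>. \<xi> \<in> ball x r \<Longrightarrow> dist (f \<xi>) (f x) \<le> e"
proof -
  obtain r1 where "r1 > 0" and r1: "\<forall>\<xi>\<in>U. dist \<xi> x < r1 \<longrightarrow> dist (f \<xi>) (f x) < e"
    using assms(1,3,4) unfolding continuous_on_iff by blast
  obtain r2 where "r2 > 0" "ball x r2 \<subseteq> U"
    using assms(2,3) open_contains_ball by blast
  show ?thesis
  proof (rule that[of "min r1 r2"])
    show "min r1 r2 > 0" using \<open>r1 > 0\<close> \<open>r2 > 0\<close> by simp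
    show "ball x (min r1 r2) \<subseteq> U" using \<open>ball x r2 \<subseteq> U\<close> by auto
    fix \<xi> assume "\<xi> \<in> ball x (min r1 r2)"
    then have "\<xi> \<in> U" "dist \<xi> x < r1" using \<open>ball x r2 \<subseteq> U\<close> by (auto simp: dist_commute)
    then show "dist (f \<xi>) (f x) \<le> e" using r1 by (simp add: less_imp_le)
  qed
qed

lemma least_squares_chart_step_error:
  fixes F :: "'a::euclidean_space \<Rightarrow> 'b::euclidean_space" and F' :: "'a \<Rightarrow> 'a \<Rightarrow>\<^sub>L 'b"
  assumes deriv: "\<And>x. x \<in> U \<Longrightarrow> (F has_derivative F' x) (at x)" and "open U" and "F ` U \<subseteq> M"
    and "ball xb r \<subseteq> U" and near_L: "\<And>\<xi>. \<xi> \<in> ball xb r \<Longrightarrow> norm (F' \<xi> - L) \<le> \<eta>"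
    and L_below: "\<And>v. 2 * c * norm v \<le> norm (L v)" and "c > 0" and "\<eta> \<le> c / 2"
    and x: "dist xb x < r / 2" and xh: "dist xb xh < r / 2"
    and Phi: "\<And>s. (\<forall>t. norm (F x + F' x s - y) \<le> norm (F x + F' x t - y)) \<Longrightarrow> Phi (F x) y = F (x + s)"
    and "F x \<in> M" and nearest: "F xh \<in> nearest_points M y" and small: "norm (y - F x) < c * r / 4"
  shows "norm (F xh - Phi (F x) y) \<le> 4 * (sqrt (\<eta> / c) + \<eta> / c) * norm (y - F x)"
proof -
  have "dist xb xh < r" using xh zero_le_dist[of xb xh] by linarith
  then have xh_U: "xh \<in> U" using \<open>ball xb r \<subseteq> U\<close> by auto
  obtain s where s: "\<And>t. norm (F' x s - (y - F x)) \<le> norm (F' x t - (y - F x))"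
    using least_squares_exists by blast
  then have "Phi (F x) y = F (x + s)"
    using Phi by (simp add: algebra_simps)
  have orth: "inner (y - F xh) (F' xh v) = 0" for v
  proof (rule nearest_point_orthogonal_derivative[OF deriv[OF xh_U] \<open>open U\<close> xh_U])
    show "dist y (F xh) \<le> dist y (F \<xi>)" if "\<xi> \<in> U" for \<xi>
      using nearest \<open>F ` U \<subseteq> M\<close> that unfolding nearest_points_def by blast
  qed
  have closer: "norm (y - F xh) \<le> norm (y - F x)"
    using nearest \<open>F x \<in> M\<close> unfolding nearest_points_def by (simp add: dist_norm)
  have deriv_ball: "\<And>\<xi>. \<xi> \<in> ball xb r \<Longrightarrow> (F has_derivative F' \<xi>) (at \<xi>)"
    using deriv \<open>ball xb r \<subseteq> U\<close> by blast
  have "norm (F xh - F (x + s)) \<le> 4 * (sqrt (\<eta> / c) + \<eta> / c) * norm (y - F x)"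
    by (rule least_squares_step_error[OF deriv_ball near_L L_below \<open>c > 0\<close> \<open>\<eta> \<le> c / 2\<close>
          x xh s orth closer small])
  with \<open>Phi (F x) y = F (x + s)\<close> show ?thesis by simp
qed

lemma least_squares_chart_error:
  fixes F :: "'a::euclidean_space \<Rightarrow> 'b::euclidean_space" and F' :: "'a \<Rightarrow> 'a \<Rightarrow>\<^sub>L 'b"
  assumes deriv: "\<And>x. x \<in> U \<Longrightarrow> (F has_derivative F' x) (at x)"
    and cont: "continuous_on U F'" and "open U"
    and hom: "homeomorphism U V F G" and "V \<subseteq> M" and V: "openin (top_of_set M) V" "ybar \<in> V"
    and inj: "inj (F' (G ybar))"
    and Phi: "\<And>x y s. x \<in> U \<Longrightarrow> (\<forall>t. norm (F x + F' x s - y) \<le> norm (F x + F' x t - y)) \<Longrightarrow>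
        Phi (F x) y = F (x + s)"
    and "\<epsilon> > 0"
  obtains \<delta> where "\<delta> > 0"
    and "\<And>z y zh. z \<in> M \<Longrightarrow> dist z ybar < \<delta> \<Longrightarrow> dist y ybar < \<delta> \<Longrightarrow> zh \<in> nearest_points M y \<Longrightarrow>
      norm (zh - Phi z y) \<le> \<epsilon> * norm (y - z)"
proof -
  define xb where "xb = G ybar"
  have xb: "xb \<in> U" and F_G: "\<And>z. z \<in> V \<Longrightarrow> G z \<in> U \<and> F (G z) = z" and "F ` U = V"
    using hom V(2) unfolding xb_def homeomorphism_def by auto
  obtain B where "B > 0" and L_below: "\<And>v. B * norm v \<le> norm (F' xb v)"
    using linear_inj_bounded_below_pos[OF bounded_linear.linear[OF blinfun.bounded_linear_right]]
      inj xb_def by blast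
  define c where "c = B / 2"
  obtain \<kappa> where "\<kappa> > 0" "\<kappa> \<le> 1 / 2" and \<kappa>: "4 * (sqrt \<kappa> + \<kappa>) \<le> \<epsilon>"
    using small_sqrt_plus_le[OF \<open>\<epsilon> > 0\<close>] .
  define \<eta> where "\<eta> = c * \<kappa>"
  have "c > 0" "\<eta> > 0" "\<eta> \<le> c / 2" and error: "4 * (sqrt (\<eta> / c) + \<eta> / c) \<le> \<epsilon>"
    using \<open>B > 0\<close> \<open>\<kappa> > 0\<close> \<open>\<kappa> \<le> 1 / 2\<close> \<kappa> by (simp_all add: c_def \<eta>_def)
  obtain r where "r > 0" and "ball xb r \<subseteq> U"
    and near_L: "\<And>\<xi>. \<xi> \<in> ball xb r \<Longrightarrow> norm (F' \<xi> - F' xb) \<le> \<eta>"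
    using continuous_on_open_ball_le[OF cont \<open>open U\<close> xb \<open>\<eta> > 0\<close>] by (metis dist_norm)
  obtain \<delta> where "\<delta> > 0"
    and local: "\<And>z. z \<in> M \<Longrightarrow> dist z ybar < \<delta> \<Longrightarrow> z \<in> V \<and> dist xb (G z) < r / 2"
    using homeomorphism_inverse_near[OF hom V half_gt_zero[OF \<open>r > 0\<close>]] unfolding xb_def by blast
  have "ybar \<in> M" using V \<open>V \<subseteq> M\<close> by blast
  \<comment> \<open>Nearest points lie within twice the distance of y to ybar, and
    the bound c r / 4 on the norm of y - z keeps the least-squares step inside the ball.\<close>
  show ?thesis
  proof (rule that[of "min (\<delta> / 2) (c * r / 8)"])
    show "min (\<delta> / 2) (c * r / 8) > 0" using \<open>\<delta> > 0\<close> \<open>c > 0\<close> \<open>r > 0\<close> by simp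
    fix z y zh
    assume "z \<in> M" and zh: "zh \<in> nearest_points M y"
      and dz: "dist z ybar < min (\<delta> / 2) (c * r / 8)" and dy: "dist y ybar < min (\<delta> / 2) (c * r / 8)"
    have "zh \<in> M" using zh unfolding nearest_points_def by blast
    have "dist zh ybar < \<delta>" "dist z ybar < \<delta>"
      using nearest_points_dist_le[OF zh \<open>ybar \<in> M\<close>] dy dz zero_le_dist[of z ybar] by linarith+
    then have "z \<in> V" "zh \<in> V" and x: "dist xb (G z) < r / 2" and xh: "dist xb (G zh) < r / 2"
      using local \<open>z \<in> M\<close> \<open>zh \<in> M\<close> by auto
    then have "G z \<in> U" "z = F (G z)" "zh = F (G zh)"
      using F_G by auto
    moreover have "norm (y - z) < c * r / 4"
      using dz dy dist_triangle[of y z ybar] by (simp add: dist_norm norm_minus_commute)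
    ultimately have "norm (zh - Phi z y) \<le> 4 * (sqrt (\<eta> / c) + \<eta> / c) * norm (y - z)"
      using least_squares_chart_step_error[where F = F and F' = F' and Phi = Phi and M = M and y = y
          and x = "G z" and xh = "G zh", OF deriv \<open>open U\<close> _ \<open>ball xb r \<subseteq> U\<close> near_L _ \<open>c > 0\<close>
          \<open>\<eta> \<le> c / 2\<close> x xh Phi[OF \<open>G z \<in> U\<close>]] L_below \<open>F ` U = V\<close> \<open>V \<subseteq> M\<close> \<open>z \<in> M\<close> zh
      by (simp add: c_def)
    also have "\<dots> \<le> \<epsilon> * norm (y - z)"
      using error by (simp add: mult_right_mono)
    finally show "norm (zh - Phi z y) \<le> \<epsilon> * norm (y - z)" .
  qed
qed

theorem mainTheorem5:
  fixes M :: "'b::euclidean_space set" and ybar :: 'b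
    and F :: "'a::euclidean_space \<Rightarrow> 'b" and F' :: "'a \<Rightarrow> ('a \<Rightarrow>\<^sub>L 'b)"
    and U :: "'a set" and V :: "'b set" and Phi :: "'b \<Rightarrow> 'b \<Rightarrow> 'b"
  assumes "ybar \<in> M"
    and deriv: "\<And>x. (F has_derivative blinfun_apply (F' x)) (at x)"
    and cont: "continuous_on UNIV F'"
    and "open U"
    and "V = F ` U" and "V \<subseteq> M" and "openin (top_of_set M) V" and "ybar \<in> V"
    and "\<exists>G. homeomorphism U V F G"
    and "\<And>x. x \<in> U \<Longrightarrow> inj (blinfun_apply (F' x))"
    and Phi_def: "\<And>x y s. x \<in> U \<Longrightarrow>
        (\<forall>t. norm (F x + F' x s - y) \<le> norm (F x + F' x t - y)) \<Longrightarrow>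
        Phi (F x) y = F (x + s)"
  shows "faithful_approx M ybar V Phi"
  unfolding faithful_approx_def
proof (intro conjI allI impI)
  show "V \<subseteq> M" "ybar \<in> V" "\<exists>W. openin (top_of_set M) W \<and> ybar \<in> W \<and> W \<subseteq> V"
    using assms(6-8) by blast+
  obtain G where hom: "homeomorphism U V F G" using assms(9) by blast
  have "G ybar \<in> U" using hom \<open>ybar \<in> V\<close> unfolding homeomorphism_def by blast
  fix \<epsilon> \<alpha> :: real
  assume "\<epsilon> > 0"
  obtain \<delta> where "\<delta> > 0" and est: "\<And>z y zh. z \<in> M \<Longrightarrow> dist z ybar < \<delta> \<Longrightarrow> dist y ybar < \<delta> \<Longrightarrow>
      zh \<in> nearest_points M y \<Longrightarrow> norm (zh - Phi z y) \<le> \<epsilon> * norm (y - z)"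
    using least_squares_chart_error[where Phi = Phi, OF deriv continuous_on_subset[OF cont subset_UNIV]
        \<open>open U\<close> hom assms(6,7,8) assms(10)[OF \<open>G ybar \<in> U\<close>] Phi_def \<open>\<epsilon> > 0\<close>] by blast
  show "\<exists>\<delta>>0. \<forall>z y zh. z \<in> M \<and> y \<notin> M \<and> dist z ybar < \<delta> \<and> dist y ybar < \<delta> \<and>
      zh \<in> nearest_points M y \<and> \<alpha> \<le> vec_angle (z - y) (zh - y)
      \<longrightarrow> norm (zh - Phi z y) \<le> \<epsilon> * norm (y - z)"
  proof (intro exI[of _ \<delta>] conjI allI impI)
    fix z y zh
    assume "z \<in> M \<and> y \<notin> M \<and> dist z ybar < \<delta> \<and> dist y ybar < \<delta> \<and>
      zh \<in> nearest_points M y \<and> \<alpha> \<le> vec_angle (z - y) (zh - y)"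
    then show "norm (zh - Phi z y) \<le> \<epsilon> * norm (y - z)"
      using est by simp
  qed fact
qed

end
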